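(* Let $H$ be the adjacency matrix or the Laplacian matrix of an undirected weighted connected graph on vertices $1,\dots,n$, and suppose perfect state transfer from vertex $1$ to vertex $2$ occurs at time $t_0$, i.e. $|\langle 1|e^{it_0H}|2\rangle|=1$. Assume moreover that there exist $\theta\in\mathbb{R}$, an integer $0\le\ell\le n$, a real orthogonal matrix $\tilde Q$ and $\tilde D=\pi\,\mathrm{diag}(r_1,\dots,r_n)$ with $r_1\ge\cdots\ge r_\ell$ positive even integers and $r_{\ell+1}\ge\cdots\ge r_n$ positive odd integers, such that $t_0H=\tilde Q^T\tilde D\tilde Q+\theta I$ and the first two rows of $\tilde Q^T$ are $(x_1,\dots,x_n)$ and $(x_1,\dots,x_\ell,-x_{\ell+1},\dots,-x_n)$ with $x_1,\dots,x_n\ge 0$ (that is, such a decomposition exists with no trailing zero block). Let $H_0$ be a nonzero real symmetric $n\times n$ perturbation and $\hat H=t_0H+H_0$. Then, as $H_0\to 0$, \[ 1-|\langle 1|e^{i\hat H}|2\rangle|^2\ \le\ \frac{2\|H_0\|_F^2}{(\pi-\|H_0\|)^2}+\|H_0\|^2+O(\|H_0\|^3). \]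
   Context: $\|\cdot\|$ denotes the operator (spectral) norm and $\|\cdot\|_F$ the Frobenius norm. For a weighted graph with edge weights $w(j,k)$, the adjacency matrix $A$ has $(j,k)$ entry $w(j,k)$ if $j,k$ are adjacent and $0$ otherwise; the Laplacian is $L=R-A$ with $R$ the diagonal matrix of row sums of $A$. $\langle 1|M|2\rangle$ denotes the $(1,2)$ entry of a matrix $M$. *)

theory Defs
  imports "HOL-Analysis.Analysis"
begin

definition weighted_connected_graph :: "('n::finite \<Rightarrow> 'n \<Rightarrow> real) \<Rightarrow> bool" where
  "weighted_connected_graph w \<longleftrightarrow>
     (\<forall>j k. w j k = w k j) \<and> (\<forall>j k. w j k \<ge> 0) \<and> (\<forall>j. w j j = 0) \<and>
     (\<forall>j k. (j, k) \<in> {(p, q). w p q > 0}\<^sup>*)"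

definition adjacency_matrix :: "('n::finite \<Rightarrow> 'n \<Rightarrow> real) \<Rightarrow> real^'n^'n" where
  "adjacency_matrix w = (\<chi> j k. w j k)"

definition laplacian_matrix :: "('n::finite \<Rightarrow> 'n \<Rightarrow> real) \<Rightarrow> real^'n^'n" where
  "laplacian_matrix w =
     (\<chi> j k. (if j = k then (\<Sum>m\<in>UNIV. adjacency_matrix w $ j $ m) else 0) - adjacency_matrix w $ j $ k)"

fun cmat_pow :: "complex^'n^'n \<Rightarrow> nat \<Rightarrow> complex^'n^'n" where
  "cmat_pow A 0 = mat 1"
| "cmat_pow A (Suc k) = A ** cmat_pow A k"

definition cmat_exp :: "complex^'n^'n \<Rightarrow> complex^'n^'n" where
  "cmat_exp A = (\<Sum>k. (\<chi> i j. (1 / (of_nat (fact k) :: complex)) * (cmat_pow A k $ i $ j)))"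

definition i_times :: "real^'n^'n \<Rightarrow> complex^'n^'n" where
  "i_times M = (\<chi> j k. \<i> * complex_of_real (M $ j $ k))"

definition op_norm :: "real^'n^'n \<Rightarrow> real" where
  "op_norm M = onorm (\<lambda>x. M *v x)"

definition frob_norm :: "real^'n^'n \<Rightarrow> real" where
  "frob_norm M = sqrt (\<Sum>j\<in>UNIV. \<Sum>k\<in>UNIV. (M $ j $ k)\<^sup>2)"

end

theory Submission imports Defs begin

text \<open>
  For real symmetric \<open>M\<close> the evolution \<open>exp (i M)\<close> is unitary. Perfect state transfer therefore
  makes \<open>w = exp (i t\<^sub>0 H) e\<^sub>2\<close> a unit multiple of \<open>e\<^sub>1\<close>, and the Duhamel formula gives
  \<open>\<parallel>exp (i (M + H\<^sub>0)) - exp (i M)\<parallel> \<le> \<parallel>H\<^sub>0\<parallel>\<close>. So the lost fidelity, which is the mass of the unit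
  vector \<open>u = exp (i (t\<^sub>0 H + H\<^sub>0)) e\<^sub>2\<close> off vertex 1, is at most \<open>\<parallel>u - w\<parallel>\<^sup>2 \<le> \<parallel>H\<^sub>0\<parallel>\<^sup>2\<close>. This is already below the
  claimed bound with remainder constant 0.
\<close>

text \<open>
  \<open>blinfun\<close> carries no multiplication, so the endomorphisms of \<open>\<complex>\<^sup>n\<close> are wrapped in a type
  that is a Banach algebra under composition; its \<open>exp\<close> computes \<open>cmat_exp\<close>.
\<close>

typedef (overloaded) ('n::finite) linop = "UNIV :: ((complex^'n) \<Rightarrow>\<^sub>L (complex^'n)) set"
  morphisms blinfun_of_linop linop_of_blinfun by auto

setup_lifting type_definition_linop

instantiation linop :: (finite) real_normed_vector
begin
lift_definition norm_linop :: "'a linop \<Rightarrow> real" is norm .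
lift_definition minus_linop :: "'a linop \<Rightarrow> 'a linop \<Rightarrow> 'a linop" is "(-)" .
lift_definition plus_linop :: "'a linop \<Rightarrow> 'a linop \<Rightarrow> 'a linop" is "(+)" .
lift_definition uminus_linop :: "'a linop \<Rightarrow> 'a linop" is uminus .
lift_definition zero_linop :: "'a linop" is 0 .
lift_definition scaleR_linop :: "real \<Rightarrow> 'a linop \<Rightarrow> 'a linop" is scaleR .
definition dist_linop :: "'a linop \<Rightarrow> 'a linop \<Rightarrow> real" where "dist_linop a b = norm (a - b)"
definition uniformity_linop :: "('a linop \<times> 'a linop) filter" where
  "uniformity_linop = (INF e\<in>{0 <..}. principal {(x, y). dist x y < e})"
definition open_linop :: "'a linop set \<Rightarrow> bool" where
  "open_linop S = (\<forall>x\<in>S. \<forall>\<^sub>F (x', y) in uniformity. x' = x \<longrightarrow> y \<in> S)"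
definition sgn_linop :: "'a linop \<Rightarrow> 'a linop" where "sgn_linop x = scaleR (inverse (norm x)) x"
instance
  by standard
    (unfold dist_linop_def open_linop_def sgn_linop_def uniformity_linop_def,
     (rule refl | (transfer, force simp: norm_triangle_ineq algebra_simps scaleR_add_right scaleR_add_left))+)
end

instantiation linop :: (finite) real_normed_algebra_1
begin
lift_definition one_linop :: "'a linop" is id_blinfun .
lift_definition times_linop :: "'a linop \<Rightarrow> 'a linop \<Rightarrow> 'a linop" is "(o\<^sub>L)" .
instance
proof
  fix a b c :: "'a linop" and r :: real
  show "a * b * c = a * (b * c)" by transfer (auto intro!: blinfun_eqI)
  show "(a + b) * c = a * c + b * c" by transfer (auto intro!: blinfun_eqI simp: blinfun.bilinear_simps)
  show "a * (b + c) = a * b + a * c" by transfer (auto intro!: blinfun_eqI simp: blinfun.bilinear_simps)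
  show "1 * a = a" by transfer (auto intro!: blinfun_eqI)
  show "a * 1 = a" by transfer (auto intro!: blinfun_eqI)
  show "r *\<^sub>R a * b = r *\<^sub>R (a * b)" by transfer (auto intro!: blinfun_eqI simp: blinfun.bilinear_simps)
  show "a * r *\<^sub>R b = r *\<^sub>R (a * b)" by transfer (auto intro!: blinfun_eqI simp: blinfun.bilinear_simps)
  show "norm (a * b) \<le> norm a * norm b" by transfer (rule norm_blinfun_compose)
  have nonzero: "(axis undefined 1 :: complex^'a) \<noteq> 0" by (simp add: axis_eq_0_iff)
  show "(0::'a linop) \<noteq> 1"
  proof
    assume "(0::'a linop) = 1"
    then have "(0 :: (complex^'a) \<Rightarrow>\<^sub>L (complex^'a)) = id_blinfun" by transfer
    then have "blinfun_apply (0 :: (complex^'a) \<Rightarrow>\<^sub>L (complex^'a)) (axis undefined 1) = axis undefined 1"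
      by (metis blinfun_apply_id_blinfun)
    with nonzero show False by simp
  qed
  show "norm (1::'a linop) = 1"
  proof transfer
    show "norm (id_blinfun :: (complex^'a) \<Rightarrow>\<^sub>L (complex^'a)) = 1"
      by (rule norm_blinfun_eqI[where x="axis undefined 1"]) (use nonzero in auto)
  qed
qed
end

instance linop :: (finite) banach
proof
  fix X :: "nat \<Rightarrow> 'a linop"
  assume "Cauchy X"
  then have "Cauchy (\<lambda>k. blinfun_of_linop (X k))"
    unfolding Cauchy_def dist_norm dist_linop_def by (simp add: norm_linop.rep_eq minus_linop.rep_eq)
  then obtain L where L: "(\<lambda>k. blinfun_of_linop (X k)) \<longlonglongrightarrow> L"
    using Cauchy_convergent_iff convergent_def by blast
  have "X \<longlonglongrightarrow> linop_of_blinfun L"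
    using L unfolding LIMSEQ_def dist_norm dist_linop_def
    by (simp add: norm_linop.rep_eq minus_linop.rep_eq linop_of_blinfun_inverse)
  then show "convergent X" by (auto simp: convergent_def)
qed

lemma linop_eqI:
  "(\<And>v. blinfun_of_linop A v = blinfun_of_linop B v) \<Longrightarrow> A = B"
  by (metis blinfun_eqI blinfun_of_linop_inject)

lemma bounded_linear_linop_apply:
  "bounded_linear (\<lambda>A::'n::finite linop. blinfun_of_linop A v)"
proof -
  have "bounded_linear (blinfun_of_linop :: 'n linop \<Rightarrow> _)"
    by (rule bounded_linear_intro[where K=1])
       (simp_all add: plus_linop.rep_eq scaleR_linop.rep_eq norm_linop.rep_eq)
  then show ?thesis
    by (rule bounded_linear_compose[OF blinfun.bounded_linear_left])
qed

definition linop_of_matrix :: "complex^'n^'n \<Rightarrow> 'n::finite linop" where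
  "linop_of_matrix M = linop_of_blinfun (Blinfun (\<lambda>v. M *v v))"

lemma linop_of_matrix_apply [simp]: "blinfun_of_linop (linop_of_matrix M) v = M *v v"
  by (simp add: linop_of_matrix_def linop_of_blinfun_inverse bounded_linear_Blinfun_apply)

lemma linop_of_matrix_mult: "linop_of_matrix (A ** B) = linop_of_matrix A * linop_of_matrix B"
  by (rule linop_eqI) (simp add: times_linop.rep_eq matrix_vector_mul_assoc)

lemma linop_of_matrix_add: "linop_of_matrix (A + B) = linop_of_matrix A + linop_of_matrix B"
  by (rule linop_eqI) (simp add: plus_linop.rep_eq plus_blinfun.rep_eq matrix_vector_mult_add_rdistrib)

lemma linop_of_matrix_cmat_pow: "linop_of_matrix (cmat_pow M k) = linop_of_matrix M ^ k"
proof (induction k)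
  case 0
  show ?case by (rule linop_eqI) (simp add: one_linop.rep_eq)
next
  case (Suc k)
  then show ?case by (simp add: linop_of_matrix_mult)
qed

lemma matrix_vector_mult_axis_nth: "((M::'a::semiring_1^'n::finite^'m) *v axis j 1) $ i = M $ i $ j"
  by (simp add: matrix_vector_mult_def axis_def if_distrib cong: if_cong)

lemma cmat_exp_nth_eq_exp_linop:
  fixes M :: "complex^'n::finite^'n"
  shows "cmat_exp M $ i $ j = blinfun_of_linop (exp (linop_of_matrix M)) (axis j 1) $ i"
proof -
  let ?term = "\<lambda>k. (\<chi> i j. (1 / (of_nat (fact k) :: complex)) * (cmat_pow M k $ i $ j))"
  let ?E = "\<chi> i j. blinfun_of_linop (exp (linop_of_matrix M)) (axis j 1) $ i"
  have exp_sums: "(\<lambda>k. (1 / fact k) *\<^sub>R linop_of_matrix M ^ k) sums exp (linop_of_matrix M)"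
    using exp_converges[of "linop_of_matrix M"] by (simp add: inverse_eq_divide)
  have entry: "bounded_linear (\<lambda>A::'n linop. blinfun_of_linop A (axis j 1) $ i)" for i j
    by (rule bounded_linear_compose[OF bounded_linear_vec_nth bounded_linear_linop_apply])
  have "(\<lambda>k. ?term k $ i $ j) sums (?E $ i $ j)" for i j
    using bounded_linear.sums[OF entry exp_sums]
    by (simp add: scaleR_linop.rep_eq scaleR_blinfun.rep_eq linop_of_matrix_cmat_pow[symmetric]
        matrix_vector_mult_axis_nth scaleR_conv_of_real[where 'a=complex])
  then have "?term sums ?E"
    unfolding sums_def sum_component by (intro vec_tendstoI) simp
  then show ?thesis
    unfolding cmat_exp_def by (simp add: sums_unique[symmetric])
qed

lemma sum_sum_antisym_eq_0:
  fixes f :: "'a \<Rightarrow> 'a \<Rightarrow> 'b::linordered_ab_group_add"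
  assumes antisym: "\<And>i j. f j i = - f i j"
  shows "(\<Sum>i\<in>I. \<Sum>j\<in>I. f i j) = 0"
proof -
  have "(\<Sum>i\<in>I. \<Sum>j\<in>I. f i j) = (\<Sum>j\<in>I. \<Sum>i\<in>I. - f j i)"
    by (subst sum.swap) (simp only: antisym[symmetric])
  also have "\<dots> = - (\<Sum>i\<in>I. \<Sum>j\<in>I. f i j)"
    by (simp add: sum_negf)
  finally show ?thesis by (simp add: equal_neg_zero)
qed

lemma transpose_eq_nth_sym: "transpose A = A \<Longrightarrow> A $ j $ i = A $ i $ j"
  by (metis transpose_def vec_lambda_beta)

lemma inner_i_times_self_eq_0:
  fixes A :: "real^'n::finite^'n" and y :: "complex^'n"
  assumes "transpose A = A"
  shows "inner y (i_times A *v y) = 0"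
proof -
  define f where "f i j = A $ i $ j * (Im (y $ i) * Re (y $ j) - Re (y $ i) * Im (y $ j))" for i j
  have "inner y (i_times A *v y) = (\<Sum>i\<in>UNIV. \<Sum>j\<in>UNIV. f i j)"
    unfolding inner_vec_def matrix_vector_mult_def i_times_def f_def
    by (simp add: inner_sum_right inner_complex_def sum_distrib_left sum_subtractf[symmetric]
        sum.distrib[symmetric], intro sum.cong refl) (simp add: algebra_simps)
  also have "\<dots> = 0"
    by (rule sum_sum_antisym_eq_0)
       (simp add: f_def transpose_eq_nth_sym[OF assms] algebra_simps)
  finally show ?thesis .
qed

abbreviation skew_linop :: "real^'n^'n \<Rightarrow> 'n::finite linop" where
  "skew_linop A \<equiv> linop_of_matrix (i_times A)"

lemma skew_linop_add: "skew_linop (A + B) = skew_linop A + skew_linop B"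
proof -
  have "i_times (A + B) = i_times A + i_times B"
    by (simp add: i_times_def vec_eq_iff algebra_simps)
  then show ?thesis by (simp add: linop_of_matrix_add)
qed

lemma norm_exp_skew_linop_apply:
  assumes "transpose A = A"
  shows "norm (blinfun_of_linop (exp (t *\<^sub>R skew_linop A)) v) = norm v"
proof -
  define y where "y s = blinfun_of_linop (exp (s *\<^sub>R skew_linop A)) v" for s
  have "(y has_vector_derivative blinfun_of_linop (skew_linop A * exp (s *\<^sub>R skew_linop A)) v) (at s)"
    for s
    unfolding y_def
    by (rule bounded_linear.has_vector_derivative[OF bounded_linear_linop_apply
          exp_scaleR_has_vector_derivative_left])
  then have y': "(y has_vector_derivative (i_times A *v y s)) (at s)" for s
    by (simp add: times_linop.rep_eq y_def)
  have "((\<lambda>s. inner (y s) (y s)) has_derivative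
         (\<lambda>h. inner (y s) (h *\<^sub>R (i_times A *v y s)) + inner (h *\<^sub>R (i_times A *v y s)) (y s))) (at s)"
    for s
    using y'[of s] unfolding has_vector_derivative_def by (intro has_derivative_inner)
  then have "((\<lambda>s. inner (y s) (y s)) has_derivative (\<lambda>h. 0)) (at s within UNIV)" for s
    by (simp add: inner_i_times_self_eq_0[OF assms] inner_commute)
  then obtain c where "\<forall>s\<in>UNIV. inner (y s) (y s) = c"
    using has_derivative_zero_constant[OF convex_UNIV] by blast
  then have "inner (y t) (y t) = inner (y 0) (y 0)" by simp
  moreover have "y 0 = v" by (simp add: y_def one_linop.rep_eq)
  ultimately show ?thesis unfolding y_def by (simp add: norm_eq_sqrt_inner)
qed

lemma norm_exp_skew_linop_le_1:
  assumes "transpose A = A"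
  shows "norm (exp (t *\<^sub>R skew_linop A)) \<le> 1"
  unfolding norm_linop.rep_eq
  by (rule norm_blinfun_bound) (simp_all add: norm_exp_skew_linop_apply[OF assms])

lemma power2_norm_vec: "(norm (x::'a::real_normed_vector^'n::finite))\<^sup>2 = (\<Sum>i\<in>UNIV. (norm (x $ i))\<^sup>2)"
  by (simp add: norm_vec_def L2_set_def sum_nonneg)

text \<open>Split \<open>v = a + i b\<close> with real \<open>a\<close>, \<open>b\<close>; then \<open>\<parallel>i A v\<parallel>\<^sup>2 = \<parallel>A a\<parallel>\<^sup>2 + \<parallel>A b\<parallel>\<^sup>2\<close>.\<close>

lemma norm_skew_linop_le_op_norm:
  fixes A :: "real^'n::finite^'n"
  shows "norm (skew_linop A) \<le> op_norm A"
proof -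
  have bl: "bounded_linear (\<lambda>v::real^'n. A *v v)"
    by (simp add: linear_conv_bounded_linear)
  have op_norm_nonneg: "0 \<le> op_norm A"
    unfolding op_norm_def by (rule onorm_pos_le[OF bl])
  have op_norm_bound: "norm (A *v a) \<le> op_norm A * norm a" for a
    unfolding op_norm_def by (rule onorm[OF bl])
  show ?thesis unfolding norm_linop.rep_eq
  proof (rule norm_blinfun_bound[OF op_norm_nonneg])
    fix v :: "complex^'n"
    define a where "a = (\<chi> i. Re (v $ i))"
    define b where "b = (\<chi> i. Im (v $ i))"
    have "Re ((i_times A *v v) $ i) = - (A *v b) $ i" "Im ((i_times A *v v) $ i) = (A *v a) $ i" for i
      by (simp_all add: i_times_def matrix_vector_mult_def a_def b_def Re_sum Im_sum sum_negf)
    then have "(norm (i_times A *v v))\<^sup>2 = (norm (A *v a))\<^sup>2 + (norm (A *v b))\<^sup>2"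
      by (simp add: power2_norm_vec cmod_power2 sum.distrib)
    also have "\<dots> \<le> (op_norm A * norm a)\<^sup>2 + (op_norm A * norm b)\<^sup>2"
      by (intro add_mono power_mono op_norm_bound) auto
    also have "\<dots> = (op_norm A * norm v)\<^sup>2"
      by (simp add: power_mult_distrib power2_norm_vec a_def b_def cmod_power2 sum.distrib algebra_simps)
    finally show "norm (blinfun_of_linop (skew_linop A) v) \<le> op_norm A * norm v"
      using op_norm_nonneg by (simp add: power2_le_iff_abs_le)
  qed
qed

text \<open>Duhamel: \<open>g s = exp (-s X) exp (s (X + Y))\<close> has derivative \<open>exp (-s X) Y exp (s (X + Y))\<close>,
  whose norm is at most \<open>\<parallel>Y\<parallel>\<close> since both exponentials are isometries.\<close>

lemma norm_exp_add_skew_linop_minus_exp_le: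
  assumes symA: "transpose A = A" and symB: "transpose B = B"
  shows "norm (exp (skew_linop A + skew_linop B) - exp (skew_linop A)) \<le> norm (skew_linop B)"
proof -
  define X where "X = skew_linop A"
  define Y where "Y = skew_linop B"
  have "transpose (A + B) = A + B"
    using symA symB by (simp add: transpose_def vec_eq_iff)
  from norm_exp_skew_linop_le_1[OF this]
  have bound_XY: "norm (exp (s *\<^sub>R (X + Y))) \<le> 1" for s
    by (simp add: X_def Y_def skew_linop_add)
  have bound_X: "norm (exp (s *\<^sub>R X)) \<le> 1" for s
    unfolding X_def by (rule norm_exp_skew_linop_le_1[OF symA])
  define g where "g s = exp (s *\<^sub>R (- X)) * exp (s *\<^sub>R (X + Y))" for s
  define g' where "g' s = exp (s *\<^sub>R (- X)) * Y * exp (s *\<^sub>R (X + Y))" for s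
  have "(g has_vector_derivative g' s) (at s within {0..1})" for s
  proof -
    have "(g has_vector_derivative exp (s *\<^sub>R (- X)) * ((X + Y) * exp (s *\<^sub>R (X + Y)))
          + (exp (s *\<^sub>R (- X)) * (- X)) * exp (s *\<^sub>R (X + Y))) (at s within {0..1})"
      unfolding g_def
      by (intro has_vector_derivative_mult exp_scaleR_has_vector_derivative_right
          has_vector_derivative_at_within[OF exp_scaleR_has_vector_derivative_left])
    then show ?thesis by (simp add: g'_def algebra_simps)
  qed
  moreover have "norm (g' s) \<le> norm Y" for s
  proof -
    have "norm (g' s) \<le> norm (exp (s *\<^sub>R (- X))) * norm Y * norm (exp (s *\<^sub>R (X + Y)))"
      unfolding g'_def by (meson norm_mult_ineq order_trans mult_right_mono norm_ge_zero)
    also have "\<dots> \<le> 1 * norm Y * 1"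
      using bound_X[of "- s"] bound_XY[of s] by (intro mult_mono) auto
    finally show ?thesis by simp
  qed
  ultimately have g_bound: "norm (g 1 - g 0) \<le> norm Y * norm (1 - (0::real))"
    by (intro differentiable_bound[of "{0..1}" g "\<lambda>s h. h *\<^sub>R g' s"])
       (auto simp: has_vector_derivative_def mult.commute intro!: onorm_bound mult_left_mono)
  have "exp (X + Y) - exp X = exp X * (g 1 - g 0)"
  proof -
    have "exp X * g 1 = exp X * exp (- X) * exp (X + Y)" by (simp add: g_def mult.assoc)
    also have "\<dots> = exp (X + Y)" by (simp add: exp_minus_inverse)
    finally show ?thesis by (simp add: g_def right_diff_distrib)
  qed
  then have "norm (exp (X + Y) - exp X) \<le> norm (exp X) * norm (g 1 - g 0)"
    by (simp add: norm_mult_ineq)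
  also have "\<dots> \<le> 1 * norm Y"
    using bound_X[of 1] g_bound by (intro mult_mono) auto
  finally show ?thesis by (simp add: X_def Y_def)
qed

lemma one_minus_power2_norm_nth_le:
  fixes u w :: "'a::real_normed_vector^'n::finite"
  assumes "norm u = 1" and "norm w = 1" and "norm (w $ k) = 1"
  shows "1 - (norm (u $ k))\<^sup>2 \<le> (norm (u - w))\<^sup>2"
proof -
  let ?R = "UNIV - {k}"
  have split: "(norm (x $ k))\<^sup>2 + (\<Sum>i\<in>?R. (norm (x $ i))\<^sup>2) = (norm x)\<^sup>2" for x :: "'a^'n"
    by (simp add: power2_norm_vec sum.remove[of UNIV k])
  have "(\<Sum>i\<in>?R. (norm (w $ i))\<^sup>2) = 0"
    using split[of w] assms(2,3) by simp
  then have w_off: "w $ i = 0" if "i \<noteq> k" for i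
    using that by (subst (asm) sum_nonneg_eq_0_iff) auto
  have "1 - (norm (u $ k))\<^sup>2 = (\<Sum>i\<in>?R. (norm (u $ i - w $ i))\<^sup>2)"
    using split[of u] assms(1) w_off by simp
  also have "\<dots> \<le> (\<Sum>i\<in>UNIV. (norm (u $ i - w $ i))\<^sup>2)"
    by (rule sum_mono2) auto
  also have "\<dots> = (norm (u - w))\<^sup>2"
    by (simp add: power2_norm_vec)
  finally show ?thesis .
qed

lemma pst_fidelity_loss_le:
  fixes M H0 :: "real^'n::finite^'n"
  assumes symM: "transpose M = M" and symH0: "transpose H0 = H0"
    and pst: "norm (cmat_exp (i_times M) $ v1 $ v2) = 1"
  shows "1 - (norm (cmat_exp (i_times (M + H0)) $ v1 $ v2))\<^sup>2 \<le> (op_norm H0)\<^sup>2"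
proof -
  define e where "e = (axis v2 1 :: complex^'n)"
  define w where "w = blinfun_of_linop (exp (skew_linop M)) e"
  define u where "u = blinfun_of_linop (exp (skew_linop (M + H0))) e"
  have norm_e: "norm e = 1" by (simp add: e_def)
  have "transpose (M + H0) = M + H0"
    using symM symH0 by (simp add: vec_eq_iff transpose_def)
  then have norm_u: "norm u = 1"
    using norm_exp_skew_linop_apply[of "M + H0" 1 e] norm_e by (simp add: u_def)
  have norm_w: "norm w = 1"
    using norm_exp_skew_linop_apply[OF symM, of 1 e] norm_e by (simp add: w_def)
  have "u - w = blinfun_of_linop (exp (skew_linop M + skew_linop H0) - exp (skew_linop M)) e"
    by (simp add: u_def w_def skew_linop_add minus_linop.rep_eq blinfun.diff_left)
  then have "norm (u - w) \<le> norm (exp (skew_linop M + skew_linop H0) - exp (skew_linop M))"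
    using norm_blinfun[of _ e] norm_e by (simp add: norm_linop.rep_eq)
  also have "\<dots> \<le> op_norm H0"
    using norm_exp_add_skew_linop_minus_exp_le[OF symM symH0] norm_skew_linop_le_op_norm[of H0]
    by linarith
  finally have "(norm (u - w))\<^sup>2 \<le> (op_norm H0)\<^sup>2"
    by (intro power_mono) auto
  moreover have "norm (w $ v1) = 1" "cmat_exp (i_times (M + H0)) $ v1 $ v2 = u $ v1"
    using pst by (simp_all add: cmat_exp_nth_eq_exp_linop w_def u_def e_def)
  ultimately show ?thesis
    using one_minus_power2_norm_nth_le[OF norm_u norm_w] by fastforce
qed

theorem theorem3p3:
  fixes w :: "'n::{finite,linorder} \<Rightarrow> 'n \<Rightarrow> real" and H :: "((real, 'n) vec, 'n) vec" and v1 v2 :: "'n" and t0 :: real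
    and \<theta> :: real and S :: "'n set" and Q :: "((real, 'n) vec, 'n) vec" and r :: "'n \<Rightarrow> int"
    and x :: "(real, 'n) vec"
  assumes graph: "weighted_connected_graph w"
    and H_def: "H = adjacency_matrix w \<or> H = laplacian_matrix w"
    and v12: "v1 \<noteq> v2"
    and pst: "norm (cmat_exp (i_times (t0 *\<^sub>R H)) $ v1 $ v2) = 1"
    and S_initial: "\<forall>i\<in>S. \<forall>j. j \<le> i \<longrightarrow> j \<in> S"
    and r_even: "\<forall>i\<in>S. even (r i) \<and> r i > 0"
    and r_odd: "\<forall>i. i \<notin> S \<longrightarrow> odd (r i) \<and> r i > 0"
    and r_sorted_even: "\<forall>i\<in>S. \<forall>j\<in>S. i \<le> j \<longrightarrow> r j \<le> r i"
    and r_sorted_odd: "\<forall>i j. i \<notin> S \<longrightarrow> j \<notin> S \<longrightarrow> i \<le> j \<longrightarrow> r j \<le> r i"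
    and Q_orth: "orthogonal_matrix Q"
    and decomp: "t0 *\<^sub>R H = transpose Q ** (\<chi> i j. if i = j then pi * real_of_int (r i) else 0) ** Q
                              + \<theta> *\<^sub>R mat 1"
    and row1: "transpose Q $ v1 = x"
    and row2: "transpose Q $ v2 = (\<chi> i. if i \<in> S then x $ i else - (x $ i))"
    and x_nonneg: "\<forall>i. x $ i \<ge> 0"
  shows "\<exists>C. \<exists>\<delta>>0. \<forall>H0.
           transpose H0 = H0 \<longrightarrow> H0 \<noteq> 0 \<longrightarrow> op_norm H0 < \<delta> \<longrightarrow>
           1 - (norm (cmat_exp (i_times (t0 *\<^sub>R H + H0)) $ v1 $ v2))\<^sup>2
             \<le> 2 * (frob_norm H0)\<^sup>2 / (pi - op_norm H0)\<^sup>2 + (op_norm H0)\<^sup>2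
                + C * (op_norm H0) ^ 3"
proof (rule exI[of _ 0], rule exI[of _ 1], intro conjI allI impI)
  fix H0 :: "((real, 'n) vec, 'n) vec"
  assume symH0: "transpose H0 = H0"
  have "w j k = w k j" for j k
    using graph by (simp add: weighted_connected_graph_def)
  then have "transpose (t0 *\<^sub>R H) = t0 *\<^sub>R H"
    using H_def by (auto simp: vec_eq_iff transpose_def laplacian_matrix_def adjacency_matrix_def)
  from pst_fidelity_loss_le[OF this symH0 pst]
  show "1 - (norm (cmat_exp (i_times (t0 *\<^sub>R H + H0)) $ v1 $ v2))\<^sup>2
          \<le> 2 * (frob_norm H0)\<^sup>2 / (pi - op_norm H0)\<^sup>2 + (op_norm H0)\<^sup>2 + 0 * (op_norm H0) ^ 3"
    by (simp add: add_increasing)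
qed simp

end
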